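(* If a tuple $v\in\mathcal{D}$ is not in the $k$-skyband $\mathcal{S}_k$ of $\mathcal{D}$, then no edge of the $k$-polygon $\mathcal{P}_k$ lies on the line $\overline{v}$; i.e., only tuples of $\mathcal{S}_k$ can form part of the $k$-polygon.
   Context: Let $\mathcal{D}\subset\mathbb{R}^2$ be a finite set of tuples in general position, $k$ a positive integer and $\tau>0$ fixed. The $k$-skyband $\mathcal{S}_k$ is the set of tuples of $\mathcal{D}$ that are not Pareto-dominated by at least $k$ other tuples, where $u$ Pareto-dominates $v$ if $u$ has strictly higher values than $v$ in both coordinates. For a tuple $v$, $\overline{v}=\{x\in\mathbb{R}^2: x\cdot v=\tau\}$; let $\mathcal{L}=\{\overline{v}:v\in\mathcal{D}\}$ and consider their arrangement (vertices = pairwise intersections, edges = segments of lines between consecutive vertices), restricted to the closed positive quadrant. The top-$k$ rank depth of a point $p$ is the number of lines of $\mathcal{L}$ intersecting the closed segment from the origin to $p$; the $k$-polygon $\mathcal{P}_k$ is the set of edges of the arrangement at depth exactly $k$. *)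

theory Defs
  imports "HOL-Analysis.Analysis"
begin

definition dominates :: "real \<times> real \<Rightarrow> real \<times> real \<Rightarrow> bool" where
  "dominates u v \<longleftrightarrow> fst u > fst v \<and> snd u > snd v"

definition skyband :: "(real \<times> real) set \<Rightarrow> nat \<Rightarrow> (real \<times> real) set" where
  "skyband D k = {v \<in> D. card {u \<in> D. dominates u v} < k}"

definition tline :: "real \<Rightarrow> real \<times> real \<Rightarrow> (real \<times> real) set" where
  "tline \<tau> v = {x. x \<bullet> v = \<tau>}"

definition posquad :: "(real \<times> real) set" where
  "posquad = {x. fst x \<ge> 0 \<and> snd x \<ge> 0}"

definition general_position :: "real \<Rightarrow> (real \<times> real) set \<Rightarrow> bool" where
  "general_position \<tau> D \<longleftrightarrow>
     0 \<notin> D \<and>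
     (\<forall>u\<in>D. \<forall>w\<in>D. u \<noteq> w \<longrightarrow> fst u * snd w \<noteq> snd u * fst w) \<and>
     (\<forall>u\<in>D. \<forall>w\<in>D. \<forall>z\<in>D. u \<noteq> w \<and> u \<noteq> z \<and> w \<noteq> z \<longrightarrow>
         tline \<tau> u \<inter> tline \<tau> w \<inter> tline \<tau> z = {})"

definition rank_depth :: "real \<Rightarrow> (real \<times> real) set \<Rightarrow> real \<times> real \<Rightarrow> nat" where
  "rank_depth \<tau> D p = card {tline \<tau> w | w. w \<in> D \<and> closed_segment 0 p \<inter> tline \<tau> w \<noteq> {}}"

text \<open>Edges of the arrangement (restricted to the closed positive quadrant)
  lying on the line of v: closures of the connected components of the part of
  the line of v in the quadrant after removing the vertices (intersections
  with the other lines).  The open component is the relative interior of the edge.\<close>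
definition open_edges_on :: "real \<Rightarrow> (real \<times> real) set \<Rightarrow> real \<times> real \<Rightarrow> (real \<times> real) set set" where
  "open_edges_on \<tau> D v =
     components ((tline \<tau> v \<inter> posquad) - \<Union>{tline \<tau> w | w. w \<in> D \<and> w \<noteq> v})"

definition arr_edges :: "real \<Rightarrow> (real \<times> real) set \<Rightarrow> (real \<times> real) set set" where
  "arr_edges \<tau> D = {closure C | C v. v \<in> D \<and> C \<in> open_edges_on \<tau> D v}"

text \<open>The k-polygon: edges of the arrangement at depth exactly k (the depth
  of an edge being the depth of the points of its relative interior, which is
  constant along the edge).\<close>
definition k_polygon :: "real \<Rightarrow> (real \<times> real) set \<Rightarrow> nat \<Rightarrow> (real \<times> real) set set" where
  "k_polygon \<tau> D k = {closure C | C v. v \<in> D \<and> C \<in> open_edges_on \<tau> D v \<and>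
                                       (\<exists>p\<in>C. rank_depth \<tau> D p = k)}"

end

theory Submission
  imports Defs
begin

text \<open>Let p be a point of the line of v in the closed positive quadrant.  Every tuple u
  dominating v satisfies p \<bullet> u > p \<bullet> v = \<tau>, so the line of u crosses the segment from
  the origin to p; together with the line of v itself this gives at least
  (number of dominators of v) + 1 distinct lines, i.e. depth > k whenever v is
  dominated by at least k tuples.\<close>

lemma inner_real_pair: "(x::real \<times> real) \<bullet> u = fst x * fst u + snd x * snd u"
  by (cases x; cases u) simp

lemma tline_neq_if_not_parallel:
  assumes "fst u * snd w \<noteq> snd u * fst w"
  shows "tline \<tau> u \<noteq> tline \<tau> w"
proof
  assume eq: "tline \<tau> u = tline \<tau> w"
  have "u \<noteq> 0" using assms by auto
  then have uu: "u \<bullet> u \<noteq> 0" by simp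
  define x0 where "x0 = (\<tau> / (u \<bullet> u)) *\<^sub>R u"
  define x1 where "x1 = x0 + (- snd u, fst u)"
  have "x0 \<bullet> u = \<tau>" using uu unfolding x0_def by simp
  moreover have "x1 \<bullet> u = x0 \<bullet> u" unfolding x1_def by (simp add: inner_real_pair algebra_simps)
  ultimately have "x0 \<in> tline \<tau> w" "x1 \<in> tline \<tau> w" using eq unfolding tline_def by auto
  then have "x1 \<bullet> w - x0 \<bullet> w = 0" unfolding tline_def by simp
  moreover have "x1 \<bullet> w - x0 \<bullet> w = fst u * snd w - snd u * fst w"
    unfolding x1_def by (simp add: inner_real_pair algebra_simps)
  ultimately show False using assms by simp
qed

lemma inj_on_tline:
  assumes "general_position \<tau> D"
  shows "inj_on (tline \<tau>) D"
  using assms tline_neq_if_not_parallel unfolding general_position_def inj_on_def by metis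

lemma inner_less_if_dominates:
  assumes "p \<in> posquad" "p \<noteq> 0" "dominates u v"
  shows "p \<bullet> v < p \<bullet> u"
proof -
  have "p \<bullet> u - p \<bullet> v = fst p * (fst u - fst v) + snd p * (snd u - snd v)"
    by (simp add: inner_real_pair algebra_simps)
  moreover have "fst p > 0 \<or> snd p > 0" "fst p \<ge> 0" "snd p \<ge> 0"
    using assms(1,2) unfolding posquad_def by (auto simp: prod_eq_iff)
  ultimately show ?thesis using assms(3) unfolding dominates_def
    by (smt (verit) mult_nonneg_nonneg mult_pos_pos)
qed

lemma closed_segment_meets_tline:
  assumes "0 < \<tau>" "\<tau> \<le> p \<bullet> u"
  shows "closed_segment 0 p \<inter> tline \<tau> u \<noteq> {}"
proof -
  define t where "t = \<tau> / (p \<bullet> u)"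
  have "0 \<le> t" "t \<le> 1" using assms unfolding t_def by auto
  then have "t *\<^sub>R p \<in> closed_segment 0 p" unfolding closed_segment_def by force
  moreover have "t *\<^sub>R p \<in> tline \<tau> u" using assms unfolding tline_def t_def by simp
  ultimately show ?thesis by blast
qed

lemma card_dominators_less_rank_depth:
  assumes "finite D" "general_position \<tau> D" "0 < \<tau>" "v \<in> D"
    and p: "p \<in> tline \<tau> v" "p \<in> posquad"
  shows "card {u \<in> D. dominates u v} < rank_depth \<tau> D p"
proof -
  define Dom where "Dom = {u \<in> D. dominates u v}"
  define S where "S = {tline \<tau> w | w. w \<in> D \<and> closed_segment 0 p \<inter> tline \<tau> w \<noteq> {}}"
  have "p \<noteq> 0" using p \<open>0 < \<tau>\<close> unfolding tline_def by auto
  have pv: "p \<bullet> v = \<tau>" using p unfolding tline_def by simp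
  have "tline \<tau> u \<in> S" if "u \<in> Dom" for u
  proof -
    have "p \<bullet> v < p \<bullet> u"
      using inner_less_if_dominates[OF p(2) \<open>p \<noteq> 0\<close>] that unfolding Dom_def by blast
    then have "\<tau> \<le> p \<bullet> u" using pv by simp
    then have "closed_segment 0 p \<inter> tline \<tau> u \<noteq> {}"
      using closed_segment_meets_tline[OF \<open>0 < \<tau>\<close>] by simp
    then show ?thesis using that unfolding S_def Dom_def by blast
  qed
  moreover have "tline \<tau> v \<in> S" using p \<open>v \<in> D\<close> unfolding S_def by blast
  ultimately have sub: "tline \<tau> ` insert v Dom \<subseteq> S" by blast
  have "S \<subseteq> tline \<tau> ` D" unfolding S_def by blast
  then have "finite S" using \<open>finite D\<close> by (simp add: finite_subset)
  have "insert v Dom \<subseteq> D" using \<open>v \<in> D\<close> unfolding Dom_def by blast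
  then have "inj_on (tline \<tau>) (insert v Dom)"
    using inj_on_tline[OF assms(2)] inj_on_subset by blast
  then have "card (tline \<tau> ` insert v Dom) = card Dom + 1"
    using \<open>finite D\<close> by (simp add: card_image Dom_def dominates_def)
  then have "card Dom < card S" using card_mono[OF \<open>finite S\<close> sub] by simp
  then show ?thesis unfolding Dom_def S_def rank_depth_def .
qed

lemma open_edges_on_subset_posquad: "C \<in> open_edges_on \<tau> D w \<Longrightarrow> C \<subseteq> posquad"
  unfolding open_edges_on_def using in_components_subset by blast

theorem lemma4p9:
  fixes D :: "(real \<times> real) set" and k :: nat and \<tau> :: real and v :: "real \<times> real"
  assumes "finite D" and "general_position \<tau> D" and "k > 0" and "\<tau> > 0"
    and "v \<in> D" and "v \<notin> skyband D k"
  shows "\<not> (\<exists>E \<in> k_polygon \<tau> D k. E \<subseteq> tline \<tau> v)"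
proof
  assume "\<exists>E \<in> k_polygon \<tau> D k. E \<subseteq> tline \<tau> v"
  then obtain C w p where C: "C \<in> open_edges_on \<tau> D w" and "p \<in> C"
    and depth: "rank_depth \<tau> D p = k" and on_v: "closure C \<subseteq> tline \<tau> v"
    unfolding k_polygon_def by blast
  have "p \<in> tline \<tau> v" using \<open>p \<in> C\<close> on_v closure_subset by blast
  moreover have "p \<in> posquad" using \<open>p \<in> C\<close> open_edges_on_subset_posquad[OF C] by blast
  ultimately have "card {u \<in> D. dominates u v} < k"
    using card_dominators_less_rank_depth[OF assms(1,2,4,5)] depth by metis
  then show False using assms(5,6) unfolding skyband_def by simp
qed

end
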